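(* Let $z_1,\dots,z_{N+1}$ be distinct points on the unit circle and let $\Phi_0,\dots,\Phi_N$ be the monic orthogonal polynomials with respect to the measure $\frac{1}{N+1}\sum_{s=1}^{N+1}\delta_{z_s}$ (equal masses), with Verblunsky parameters $a_0,\dots,a_{N-1}$ ($|a_k|<1$), completed by $\Phi_{N+1}(z)=\prod_{s=1}^{N+1}(z-z_s)=z\Phi_N(z)-\overline{a_N}\Phi_N^*(z)$ with $|a_N|=1$. Let $\tilde\Phi_0,\dots,\tilde\Phi_{N+1}$ be the mirror-dual system, i.e. the monic polynomials generated by the Szegő recurrence from $\tilde a_n=-a_N\overline{a_{N-n-1}}$, $n=0,\dots,N$ (with $a_{-1}=-1$). Then $\tilde\Phi_{N+1}=\Phi_{N+1}$ and $$\tilde\Phi_N(z)=\frac{1}{N+1}\,\Phi_{N+1}'(z),$$ i.e. the mirror-dual system is the Sturmian POPUC system associated with $\Phi_{N+1}$; equivalently its orthogonality weights are proportional to $1/|\Phi_{N+1}'(z_s)|^2$.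
   Context: Szegő recurrence: $\Phi_0=1$, $\Phi_{n+1}(z)=z\Phi_n(z)-\overline{a_n}\Phi_n^*(z)$ with $\Phi_n^*(z)=z^n\overline{\Phi_n}(1/z)$ ($\overline{\Phi_n}$ = polynomial with conjugated coefficients); the $a_n$ are the Verblunsky parameters. A POPUC system $\Phi_0,\dots,\Phi_{N+1}$ (with $|a_k|<1$ for $k<N$, $|a_N|=1$) is called Sturmian if $\Phi_N=\Phi_{N+1}'/(N+1)$. *)

theory Defs
  imports "HOL-Computational_Algebra.Polynomial" Complex_Main
begin

text \<open>Reversed polynomial: \<open>p\<^sup>*(z) = z^n * conj(p)(1/z)\<close> for a polynomial p of degree at most n.\<close>
definition poly_star :: "nat \<Rightarrow> complex poly \<Rightarrow> complex poly" where
  "poly_star n p = (\<Sum>k\<le>n. monom (cnj (coeff p k)) (n - k))"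

fun szego :: "(nat \<Rightarrow> complex) \<Rightarrow> nat \<Rightarrow> complex poly" where
  "szego a 0 = 1"
| "szego a (Suc n) = [:0, 1:] * szego a n - smult (cnj (a n)) (poly_star n (szego a n))"

text \<open>Mirror-dual parameters: \<open>\<tilde>a\<^sub>n = - a\<^sub>N conj(a\<^sub>N\<^sub>-\<^sub>n\<^sub>-\<^sub>1)\<close> for n = 0..N, with the
  convention \<open>a\<^sub>-\<^sub>1 = -1\<close> (so \<open>\<tilde>a\<^sub>N = a\<^sub>N\<close>). Values for n > N are irrelevant.\<close>
definition mirror_dual :: "(nat \<Rightarrow> complex) \<Rightarrow> nat \<Rightarrow> nat \<Rightarrow> complex" where
  "mirror_dual a N n = (if n < N then - a N * cnj (a (N - n - 1)) else a N)"

end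

theory Submission
  imports Defs
begin

(* Write the Szego recursion with transfer matrices: (\<Phi>\<^sub>n, \<Phi>\<^sub>n\<^sup>* ) is M(a\<^sub>n\<^sub>-\<^sub>1) \<cdots> M(a\<^sub>0) applied
   to (1, 1). A twisted conjugate transposition reverses such products and conjugates the
   parameters, so the transfer matrix of the mirror-dual system is read off from the original
   one: its \<Phi>\<^sub>N\<^sub>+\<^sub>1 is the same, and its \<Phi>\<^sub>N is A - conj(a\<^sub>N) C, where (A, z C) is the first
   column of the original transfer matrix of size N. Orthogonality of \<Phi>\<^sub>1, ..., \<Phi>\<^sub>N to the
   constants identifies that column with the divided differences
   \<integral> (p(x) - p(t)) / (x - t) d\<mu>(t) of \<Phi>\<^sub>N and \<Phi>\<^sub>N\<^sup>*, so the mirror-dual \<Phi>\<^sub>N is the divided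
   difference of \<Phi>\<^sub>N\<^sub>+\<^sub>1; for \<Phi>\<^sub>N\<^sub>+\<^sub>1 = \<Prod>(x - z\<^sub>s) and equal masses this is \<Phi>\<^sub>N\<^sub>+\<^sub>1' / (N + 1). *)

lemma coeff_poly_star:
  "coeff (poly_star n p) k = (if k \<le> n then cnj (coeff p (n - k)) else 0)"
proof -
  have "coeff (poly_star n p) k = (\<Sum>j\<le>n. if j = n - k \<and> k \<le> n then cnj (coeff p j) else 0)"
    unfolding poly_star_def coeff_sum coeff_monom by (rule sum.cong) auto
  then show ?thesis
    by (cases "k \<le> n") (simp_all add: sum.delta')
qed

lemma degree_poly_star: "degree (poly_star n p) \<le> n"
  by (rule degree_le) (simp add: coeff_poly_star)

lemma poly_star_Suc_step:
  assumes "degree p \<le> n"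
  shows "poly_star (Suc n) ([:0, 1:] * p - smult (cnj \<alpha>) (poly_star n p))
       = poly_star n p - smult \<alpha> ([:0, 1:] * p)"
proof (rule poly_eqI)
  fix k
  have high: "coeff p j = 0" if "j > n" for j
    using assms that by (simp add: coeff_eq_0)
  show "coeff (poly_star (Suc n) ([:0, 1:] * p - smult (cnj \<alpha>) (poly_star n p))) k
      = coeff (poly_star n p - smult \<alpha> ([:0, 1:] * p)) k"
    by (cases k)
       (auto simp: coeff_poly_star coeff_pCons mult_pCons_left high Suc_diff_le
             intro!: arg_cong[where f = "coeff p"] split: nat.split)
qed

lemma degree_szego: "degree (szego a n) \<le> n"
proof (induction n)
  case 0
  then show ?case by simp
next
  case (Suc n)
  have "degree ([:0, 1:] * szego a n) \<le> Suc n"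
    using Suc by (simp add: mult_pCons_left)
  moreover have "degree (smult (cnj (a n)) (poly_star n (szego a n))) \<le> Suc n"
    using degree_poly_star[of n] by (meson degree_smult_le le_Suc_eq order_trans)
  ultimately show ?case
    by (simp add: degree_diff_le)
qed

lemma poly_star_szego_Suc:
  "poly_star (Suc n) (szego a (Suc n)) = poly_star n (szego a n) - smult (a n) ([:0, 1:] * szego a n)"
  using poly_star_Suc_step[OF degree_szego] by simp

(* TMat A B C D encodes the matrix [[A, B], [z C, D]]. *)
datatype tmat = TMat (tm11: "complex poly") (tm12: "complex poly") (tm21: "complex poly") (tm22: "complex poly")

fun tmat_mult :: "tmat \<Rightarrow> tmat \<Rightarrow> tmat" where
  "tmat_mult (TMat A B C D) (TMat A' B' C' D') =
     TMat (A * A' + [:0, 1:] * B * C') (A * B' + B * D') (C * A' + D * C') ([:0, 1:] * C * B' + D * D')"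

definition tmat_id :: tmat where
  "tmat_id = TMat 1 0 0 1"

definition szego_mat :: "complex \<Rightarrow> tmat" where
  "szego_mat \<alpha> = TMat [:0, 1:] [:- cnj \<alpha>:] [:- \<alpha>:] 1"

fun transfer :: "(nat \<Rightarrow> complex) \<Rightarrow> nat \<Rightarrow> tmat" where
  "transfer a 0 = tmat_id"
| "transfer a (Suc n) = tmat_mult (szego_mat (a n)) (transfer a n)"

fun tmat_swap :: "complex \<Rightarrow> tmat \<Rightarrow> tmat" where
  "tmat_swap c (TMat A B C D) = TMat A (smult (cnj c) C) (smult c B) D"

lemma tmat_mult_assoc: "tmat_mult (tmat_mult X Y) Z = tmat_mult X (tmat_mult Y Z)"
  by (cases X; cases Y; cases Z) (simp add: algebra_simps)

lemma tmat_mult_id_left [simp]: "tmat_mult tmat_id X = X"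
  by (cases X) (simp add: tmat_id_def)

lemma tmat_mult_id_right [simp]: "tmat_mult X tmat_id = X"
  by (cases X) (simp add: tmat_id_def)

lemma tmat_swap_mult:
  assumes "cnj c * c = 1"
  shows "tmat_swap c (tmat_mult X Y) = tmat_mult (tmat_swap c Y) (tmat_swap c X)"
proof -
  have "c * cnj c = 1"
    using assms by (simp add: mult.commute)
  with assms show ?thesis
    by (cases X; cases Y) (simp add: algebra_simps smult_add_right)
qed

lemma tmat_swap_szego_mat: "tmat_swap c (szego_mat \<alpha>) = szego_mat (c * cnj \<alpha>)"
  by (simp add: szego_mat_def)

lemma transfer_cong: "(\<And>k. k < n \<Longrightarrow> a k = b k) \<Longrightarrow> transfer a n = transfer b n"
  by (induction n) auto

lemma transfer_Suc_right: "transfer a (Suc n) = tmat_mult (transfer (\<lambda>k. a (Suc k)) n) (szego_mat (a 0))"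
proof (induction n arbitrary: a)
  case 0
  then show ?case by simp
next
  case (Suc n)
  have "transfer a (Suc (Suc n)) = tmat_mult (szego_mat (a (Suc n))) (transfer a (Suc n))"
    by simp
  also have "\<dots> = tmat_mult (szego_mat (a (Suc n))) (tmat_mult (transfer (\<lambda>k. a (Suc k)) n) (szego_mat (a 0)))"
    using Suc by simp
  also have "\<dots> = tmat_mult (transfer (\<lambda>k. a (Suc k)) (Suc n)) (szego_mat (a 0))"
    by (simp add: tmat_mult_assoc)
  finally show ?case .
qed

lemma transfer_reverse_cnj:
  assumes "cnj c * c = 1"
  shows "transfer (\<lambda>k. c * cnj (a (n - 1 - k))) n = tmat_swap c (transfer a n)"
proof (induction n arbitrary: a)
  case 0
  then show ?case by (simp add: tmat_id_def)
next
  case (Suc n)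
  have "transfer (\<lambda>k. c * cnj (a (n - k))) n = transfer (\<lambda>k. c * cnj (a (Suc (n - 1 - k)))) n"
    by (rule transfer_cong) (simp add: Suc_diff_Suc)
  also have "\<dots> = tmat_swap c (transfer (\<lambda>k. a (Suc k)) n)"
    by (rule Suc.IH)
  finally have "transfer (\<lambda>k. c * cnj (a (Suc n - 1 - k))) (Suc n)
      = tmat_mult (szego_mat (c * cnj (a 0))) (tmat_swap c (transfer (\<lambda>k. a (Suc k)) n))"
    by simp
  also have "\<dots> = tmat_swap c (tmat_mult (transfer (\<lambda>k. a (Suc k)) n) (szego_mat (a 0)))"
    by (simp add: tmat_swap_mult[OF assms] tmat_swap_szego_mat)
  also have "\<dots> = tmat_swap c (transfer a (Suc n))"
    by (simp only: transfer_Suc_right)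
  finally show ?case .
qed

lemma szego_transfer:
  "szego a n = tm11 (transfer a n) + tm12 (transfer a n)
 \<and> poly_star n (szego a n) = [:0, 1:] * tm21 (transfer a n) + tm22 (transfer a n)"
proof (induction n)
  case 0
  then show ?case by (simp add: poly_star_def tmat_id_def)
next
  case (Suc n)
  obtain A B C D where T: "transfer a n = TMat A B C D"
    by (cases "transfer a n")
  with Suc have \<Phi>: "szego a n = A + B" and \<Phi>_star: "poly_star n (szego a n) = [:0, 1:] * C + D"
    by auto
  have \<Phi>_Suc: "szego a (Suc n) = [:0, 1:] * (A + B) - smult (cnj (a n)) ([:0, 1:] * C + D)"
    by (simp only: szego.simps \<Phi>_star) (simp only: \<Phi>)
  have \<Phi>_star_Suc: "poly_star (Suc n) (szego a (Suc n)) = [:0, 1:] * C + D - smult (a n) ([:0, 1:] * (A + B))"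
    by (simp only: poly_star_szego_Suc \<Phi>_star) (simp only: \<Phi>)
  show ?case
    unfolding \<Phi>_star_Suc unfolding \<Phi>_Suc
    by (simp add: T szego_mat_def algebra_simps smult_add_right smult_diff_right)
qed

lemma cnj_mult_self_eq_1: "norm (\<alpha> :: complex) = 1 \<Longrightarrow> cnj \<alpha> * \<alpha> = 1"
  by (metis complex_norm_square mult.commute of_real_1 power_one)

lemma transfer_mirror_dual:
  assumes "norm (a N) = 1"
  shows "transfer (mirror_dual a N) N = tmat_swap (- a N) (transfer a N)"
proof -
  have "transfer (mirror_dual a N) N = transfer (\<lambda>k. - a N * cnj (a (N - 1 - k))) N"
    by (rule transfer_cong) (simp add: mirror_dual_def)
  also have "\<dots> = tmat_swap (- a N) (transfer a N)"
    using cnj_mult_self_eq_1[OF assms] by (intro transfer_reverse_cnj) simp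
  finally show ?thesis .
qed

lemma szego_mirror_dual:
  assumes "norm (a N) = 1"
  shows "szego (mirror_dual a N) N = tm11 (transfer a N) - smult (cnj (a N)) (tm21 (transfer a N))"
  using szego_transfer[of "mirror_dual a N" N] transfer_mirror_dual[of a N, OF assms]
  by (cases "transfer a N") simp

lemma szego_mirror_dual_Suc:
  assumes "norm (a N) = 1"
  shows "szego (mirror_dual a N) (Suc N) = szego a (Suc N)"
proof -
  have unit: "cnj (a N) * a N = 1" "a N * cnj (a N) = 1"
    using cnj_mult_self_eq_1[OF assms] by (simp_all add: mult.commute)
  have "mirror_dual a N N = a N"
    by (simp add: mirror_dual_def)
  moreover have "szego b (Suc N) = tm11 (transfer b (Suc N)) + tm12 (transfer b (Suc N))" for b
    using szego_transfer by blast
  ultimately show ?thesis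
    using transfer_mirror_dual[of a N, OF assms]
    by (cases "transfer a N")
       (simp del: szego.simps add: szego_mat_def algebra_simps smult_add_right smult_diff_right unit)
qed

(* \<integral> p d\<mu> and \<integral> (p(x) - p(t)) / (x - t) d\<mu>(t) for \<mu> = \<Sum>\<^sub>s\<^sub>\<in>\<^sub>I w\<^sub>s \<delta>(z\<^sub>s); the latter maps
   \<Phi>\<^sub>n to the second-kind polynomials. *)
definition discrete_integral :: "nat set \<Rightarrow> (nat \<Rightarrow> complex) \<Rightarrow> (nat \<Rightarrow> complex) \<Rightarrow> complex poly \<Rightarrow> complex" where
  "discrete_integral I w z p = (\<Sum>s\<in>I. w s * poly p (z s))"

definition discrete_divdiff :: "nat set \<Rightarrow> (nat \<Rightarrow> complex) \<Rightarrow> (nat \<Rightarrow> complex) \<Rightarrow> complex poly \<Rightarrow> complex poly" where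
  "discrete_divdiff I w z p = (\<Sum>s\<in>I. smult (w s) (synthetic_div p (z s)))"

lemma synthetic_div_diff:
  "synthetic_div (p - q :: 'a :: comm_ring poly) c = synthetic_div p c - synthetic_div q c"
proof -
  have "(p - q) + smult c (synthetic_div p c - synthetic_div q c)
      = pCons (poly p c - poly q c) (synthetic_div p c - synthetic_div q c)"
    using synthetic_div_correct[of p c] synthetic_div_correct[of q c]
    by (simp add: algebra_simps smult_diff_right)
  then show ?thesis
    by (metis synthetic_div_unique)
qed

lemma synthetic_div_smult:
  "synthetic_div (smult a p :: 'a :: comm_ring poly) c = smult a (synthetic_div p c)"
proof -
  have "smult a p + smult c (smult a (synthetic_div p c)) = pCons (a * poly p c) (smult a (synthetic_div p c))"
    using arg_cong[OF synthetic_div_correct[of p c], of "smult a"]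
    by (simp add: smult_add_right mult.commute)
  then show ?thesis
    by (metis synthetic_div_unique)
qed

lemma sum_pCons: "(\<Sum>s\<in>I. pCons (f s) (g s)) = pCons (\<Sum>s\<in>I. f s) (\<Sum>s\<in>I. g s)"
  by (induction I rule: infinite_finite_induct) auto

lemma smult_sum_right: "smult c (\<Sum>s\<in>I. f s) = (\<Sum>s\<in>I. smult c (f s))"
  by (induction I rule: infinite_finite_induct) (auto simp: smult_add_right)

lemma discrete_divdiff_diff:
  "discrete_divdiff I w z (p - q) = discrete_divdiff I w z p - discrete_divdiff I w z q"
  by (simp add: discrete_divdiff_def synthetic_div_diff smult_diff_right sum_subtractf)

lemma discrete_divdiff_smult:
  "discrete_divdiff I w z (smult a p) = smult a (discrete_divdiff I w z p)"
  by (simp add: discrete_divdiff_def synthetic_div_smult smult_sum_right mult.commute)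

lemma discrete_divdiff_mult_X:
  "discrete_divdiff I w z ([:0, 1:] * p) = pCons (discrete_integral I w z p) (discrete_divdiff I w z p)"
  by (simp add: discrete_divdiff_def discrete_integral_def mult_pCons_left sum_pCons)

lemma discrete_divdiff_szego_Suc:
  "discrete_divdiff I w z (szego a (Suc n))
     = pCons (discrete_integral I w z (szego a n)) (discrete_divdiff I w z (szego a n))
       - smult (cnj (a n)) (discrete_divdiff I w z (poly_star n (szego a n)))"
  "discrete_divdiff I w z (poly_star (Suc n) (szego a (Suc n)))
     = discrete_divdiff I w z (poly_star n (szego a n))
       - smult (a n) (pCons (discrete_integral I w z (szego a n)) (discrete_divdiff I w z (szego a n)))"
  by (unfold poly_star_szego_Suc, simp_all only: szego.simps discrete_divdiff_diff discrete_divdiff_smult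
      discrete_divdiff_mult_X)

lemma transfer_first_column:
  assumes orth_1: "\<And>n. 1 \<le> n \<Longrightarrow> n \<le> N \<Longrightarrow> discrete_integral I w z (szego a n) = 0"
    and mass_1: "discrete_integral I w z 1 = 1"
    and "n \<le> N"
  shows "tm11 (transfer a n) = pCons (discrete_integral I w z (szego a n)) (discrete_divdiff I w z (szego a n))
       \<and> tm21 (transfer a n) = discrete_divdiff I w z (poly_star n (szego a n))"
  using \<open>n \<le> N\<close>
proof (induction n)
  case 0
  then show ?case
    using mass_1 by (simp add: tmat_id_def poly_star_def discrete_divdiff_def one_pCons)
next
  case (Suc n)
  obtain A B C D where T: "transfer a n = TMat A B C D"
    by (cases "transfer a n")
  with Suc show ?case
    using orth_1[of "Suc n"]
    by (simp del: szego.simps add: discrete_divdiff_szego_Suc T szego_mat_def algebra_simps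
        smult_add_right smult_diff_right)
qed

lemma szego_mirror_dual_eq_discrete_divdiff:
  assumes "norm (a N) = 1"
    and "\<And>n. 1 \<le> n \<Longrightarrow> n \<le> N \<Longrightarrow> discrete_integral I w z (szego a n) = 0"
    and "discrete_integral I w z 1 = 1"
  shows "szego (mirror_dual a N) N = discrete_divdiff I w z (szego a (Suc N))"
  using szego_mirror_dual[of a N, OF assms(1)] transfer_first_column[OF assms(2,3) order.refl]
  by (simp del: szego.simps add: discrete_divdiff_szego_Suc)

lemma discrete_divdiff_node_poly:
  assumes "finite I"
  shows "discrete_divdiff I (\<lambda>_. c) z (\<Prod>t\<in>I. [:- z t, 1:]) = smult c (pderiv (\<Prod>t\<in>I. [:- z t, 1:]))"
proof -
  have "synthetic_div (\<Prod>t\<in>I. [:- z t, 1:]) (z s) = (\<Prod>t\<in>I - {s}. [:- z t, 1:])" if "s \<in> I" for s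
  proof -
    have "(\<Prod>t\<in>I. [:- z t, 1:]) + smult (z s) (\<Prod>t\<in>I - {s}. [:- z t, 1:]) = pCons 0 (\<Prod>t\<in>I - {s}. [:- z t, 1:])"
      using assms that by (simp add: prod.remove mult_pCons_left)
    then show ?thesis
      by (metis synthetic_div_unique)
  qed
  then show ?thesis
    unfolding discrete_divdiff_def pderiv_prod smult_sum_right
    by (intro sum.cong) (simp_all add: pderiv_pCons)
qed

theorem corollary1:
  fixes N :: nat and z :: "nat \<Rightarrow> complex" and a :: "nat \<Rightarrow> complex"
  assumes distinct: "inj_on z {1..N+1}"
    and on_circle: "\<And>s. s \<in> {1..N+1} \<Longrightarrow> norm (z s) = 1"
    and a_in_disk: "\<And>k. k < N \<Longrightarrow> norm (a k) < 1"
    and a_N: "norm (a N) = 1"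
    and orth: "\<And>m n. m < n \<Longrightarrow> n \<le> N \<Longrightarrow>
        (\<Sum>s\<in>{1..N+1}. (1 / of_nat (N+1)) * poly (szego a n) (z s) * cnj (poly (szego a m) (z s))) = 0"
    and last: "szego a (N+1) = (\<Prod>s\<in>{1..N+1}. [:- z s, 1:])"
  shows "szego (mirror_dual a N) (N+1) = szego a (N+1)
       \<and> szego (mirror_dual a N) N = smult (1 / of_nat (N+1)) (pderiv (szego a (N+1)))"
proof -
  define w where "w = (\<lambda>_ :: nat. 1 / of_nat (N + 1) :: complex)"
  have orth_1: "discrete_integral {1..N+1} w z (szego a n) = 0" if "1 \<le> n" "n \<le> N" for n
    using orth[of 0 n] that by (simp add: discrete_integral_def w_def)
  have mass_1: "discrete_integral {1..N+1} w z 1 = 1"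
    by (simp add: discrete_integral_def w_def del: of_nat_Suc of_nat_add)
  have "szego (mirror_dual a N) N = discrete_divdiff {1..N+1} w z (szego a (N+1))"
    using szego_mirror_dual_eq_discrete_divdiff[of a N, OF a_N orth_1 mass_1] by simp
  also have "\<dots> = smult (1 / of_nat (N+1)) (pderiv (szego a (N+1)))"
    unfolding last w_def by (rule discrete_divdiff_node_poly) simp
  finally show ?thesis
    using szego_mirror_dual_Suc[of a N, OF a_N] by simp
qed

end
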